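(* Let $(u,m)$ be a pair of smooth (classical) solutions to the system \[ \begin{cases} u_t + \frac{\sigma^2}{2} u_{xx} - ru + G(u_x,m)^2 = 0, & 0<t<T,\ 0<x<L,\\ m_t - \frac{\sigma^2}{2} m_{xx} - \{G(u_x,m)m\}_x = 0, & 0<t<T,\ 0<x<L,\\ m(0,x)=m_0(x),\quad u(T,x)=u_T(x), & 0\le x\le L,\\ u_x(t,0)=u_x(t,L)=0, & 0\le t\le T,\\ \frac{\sigma^2}{2} m_x(t,x) + G(u_x,m)m(t,x) = 0, & 0\le t\le T,\ x\in\{0,L\}, \end{cases} \] where $G(u_x,m)(t,x) := \frac12\left(b + c\int_0^L u_x(t,y)m(t,y)\,dy - u_x(t,x)\right)$. Then for all $t\in[0,T]$, $m(t,\cdot)$ is a probability density on $[0,L]$, and $u(t,x)\ge 0$ for all $t\in[0,T]$, $x\in[0,L]$. Moreover, there is a constant $C>0$ depending only on the data such that \[ \int_0^T\int_0^L m\,u_x^2\,dx\,dt \le C. \]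
   Context: Standing setting: $L,T,\sigma,r>0$ are constants, $\epsilon>0$, and $b=\frac{2}{2+\epsilon}$, $c=\frac{\epsilon}{2+\epsilon}$. The data satisfy: $u_T,m_0\in C^{2+\gamma}([0,L])$ for some $\gamma>0$; $u_T'(0)=u_T'(L)=0$ and $m_0(0)=m_0'(0)=m_0(L)=m_0'(L)=0$; $m_0$ is a probability density on $[0,L]$; $u_T\ge 0$. "Depending only on the data" means depending only on $u_T,m_0,L,T,\sigma,r,\epsilon$. *)

theory Defs
  imports "HOL-Analysis.Analysis"
begin

definition holder_on :: "real \<Rightarrow> real set \<Rightarrow> (real \<Rightarrow> real) \<Rightarrow> bool" where
  "holder_on \<gamma> S f \<longleftrightarrow> (\<exists>K. \<forall>x\<in>S. \<forall>y\<in>S. \<bar>f x - f y\<bar> \<le> K * \<bar>x - y\<bar> powr \<gamma>)"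

definition C2_holder :: "real \<Rightarrow> real \<Rightarrow> (real \<Rightarrow> real) \<Rightarrow> (real \<Rightarrow> real) \<Rightarrow> (real \<Rightarrow> real) \<Rightarrow> bool" where
  "C2_holder \<gamma> L f f1 f2 \<longleftrightarrow>
     (\<forall>x\<in>{0..L}. (f has_real_derivative f1 x) (at x within {0..L})
                 \<and> (f1 has_real_derivative f2 x) (at x within {0..L}))
     \<and> holder_on \<gamma> {0..L} f2"

definition prob_density :: "real \<Rightarrow> (real \<Rightarrow> real) \<Rightarrow> bool" where
  "prob_density L f \<longleftrightarrow> (\<forall>x\<in>{0..L}. 0 \<le> f x) \<and> f integrable_on {0..L} \<and> integral {0..L} f = 1"

definition Gterm :: "real \<Rightarrow> real \<Rightarrow> real \<Rightarrow> (real \<Rightarrow> real \<Rightarrow> real) \<Rightarrow> (real \<Rightarrow> real \<Rightarrow> real)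
                     \<Rightarrow> real \<Rightarrow> real \<Rightarrow> real" where
  "Gterm L b c ux m t x = (b + c * integral {0..L} (\<lambda>y. ux t y * m t y) - ux t x) / 2"

definition mfg_solution ::
  "real \<Rightarrow> real \<Rightarrow> real \<Rightarrow> real \<Rightarrow> real \<Rightarrow> real \<Rightarrow> (real \<Rightarrow> real) \<Rightarrow> (real \<Rightarrow> real)
   \<Rightarrow> (real \<Rightarrow> real \<Rightarrow> real) \<Rightarrow> (real \<Rightarrow> real \<Rightarrow> real) \<Rightarrow> (real \<Rightarrow> real \<Rightarrow> real) \<Rightarrow> (real \<Rightarrow> real \<Rightarrow> real)
   \<Rightarrow> (real \<Rightarrow> real \<Rightarrow> real) \<Rightarrow> (real \<Rightarrow> real \<Rightarrow> real) \<Rightarrow> (real \<Rightarrow> real \<Rightarrow> real) \<Rightarrow> (real \<Rightarrow> real \<Rightarrow> real)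
   \<Rightarrow> bool" where
  "mfg_solution L T \<sigma> r b c uT m0 u ut ux uxx m mt mx mxx \<longleftrightarrow>
     \<comment> \<open>regularity\<close>
     (\<forall>t\<in>{0..T}. \<forall>x\<in>{0..L}.
        ((\<lambda>s. u s x) has_real_derivative ut t x) (at t within {0..T}) \<and>
        ((\<lambda>y. u t y) has_real_derivative ux t x) (at x within {0..L}) \<and>
        ((\<lambda>y. ux t y) has_real_derivative uxx t x) (at x within {0..L}) \<and>
        ((\<lambda>s. m s x) has_real_derivative mt t x) (at t within {0..T}) \<and>
        ((\<lambda>y. m t y) has_real_derivative mx t x) (at x within {0..L}) \<and>
        ((\<lambda>y. mx t y) has_real_derivative mxx t x) (at x within {0..L})) \<and>
     continuous_on ({0..T} \<times> {0..L}) (\<lambda>(t,x). u t x) \<and>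
     continuous_on ({0..T} \<times> {0..L}) (\<lambda>(t,x). ut t x) \<and>
     continuous_on ({0..T} \<times> {0..L}) (\<lambda>(t,x). ux t x) \<and>
     continuous_on ({0..T} \<times> {0..L}) (\<lambda>(t,x). uxx t x) \<and>
     continuous_on ({0..T} \<times> {0..L}) (\<lambda>(t,x). m t x) \<and>
     continuous_on ({0..T} \<times> {0..L}) (\<lambda>(t,x). mt t x) \<and>
     continuous_on ({0..T} \<times> {0..L}) (\<lambda>(t,x). mx t x) \<and>
     continuous_on ({0..T} \<times> {0..L}) (\<lambda>(t,x). mxx t x) \<and>
     \<comment> \<open>HJB equation\<close>
     (\<forall>t x. 0 < t \<and> t < T \<and> 0 < x \<and> x < L \<longrightarrow>
        ut t x + \<sigma>\<^sup>2 / 2 * uxx t x - r * u t x + (Gterm L b c ux m t x)\<^sup>2 = 0) \<and>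
     \<comment> \<open>Fokker-Planck equation\<close>
     (\<forall>t x. 0 < t \<and> t < T \<and> 0 < x \<and> x < L \<longrightarrow>
        (\<exists>D. ((\<lambda>y. Gterm L b c ux m t y * m t y) has_real_derivative D) (at x) \<and>
             mt t x - \<sigma>\<^sup>2 / 2 * mxx t x - D = 0)) \<and>
     \<comment> \<open>initial / terminal data\<close>
     (\<forall>x\<in>{0..L}. m 0 x = m0 x \<and> u T x = uT x) \<and>
     \<comment> \<open>Neumann condition for u\<close>
     (\<forall>t\<in>{0..T}. ux t 0 = 0 \<and> ux t L = 0) \<and>
     \<comment> \<open>no-flux condition for m\<close>
     (\<forall>t\<in>{0..T}. \<forall>x\<in>{0, L}. \<sigma>\<^sup>2 / 2 * mx t x + Gterm L b c ux m t x * m t x = 0)"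

end

theory Submission
  imports Defs
begin

(* Both sign statements are maximum principles. At a negative minimum of u over [t,T] x [0,L],
   u_x vanishes (by the Neumann condition on the boundary), so the HJB equation gives
   -r u = u_t + sigma^2/2 u_xx + G^2 >= 0. For m one minimises
   exp(-omega s) exp(-K (x - L/2)^2) m(s,x) over [0,t] x [0,L]: at a negative minimum on the
   boundary the slope K L of the Gaussian weight beats the drift G in the no-flux condition, and
   at an interior minimum the Fokker-Planck equation is violated once omega is large. The no-flux
   condition also makes the mass of m constant.

   For the estimate, integration by parts using both equations and all boundary conditions gives
     d/dt int u m = r int u m - (b + c A)^2 / 4 + int m u_x^2 / 4,   where A = int u_x m.
   Jensen's inequality A^2 <= int m u_x^2 together with b + c = 1 yields
   (b + c A)^2 <= b + c int m u_x^2, hence b int m u_x^2 <= 4 d/dt int u m + b. Integrating over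
   [0,T] and using int u m >= 0 and int u(T) m(T) <= max u_T bounds the double integral by
   4 max u_T / b + T. *)

section \<open>Extrema and integrals of functions of one and two real variables\<close>

lemma has_real_derivative_nonneg_at_min_Icc:
  fixes f :: "real \<Rightarrow> real"
  assumes f: "(f has_real_derivative l) (at x within {a..b})"
    and x: "x \<in> {a..b}" "x < b"
    and min: "\<And>y. y \<in> {a..b} \<Longrightarrow> f x \<le> f y"
  shows "0 \<le> l"
proof (rule ccontr)
  assume "\<not> 0 \<le> l"
  then obtain d where "d > 0"
    and d: "\<And>h. 0 < h \<Longrightarrow> x + h \<in> {a..b} \<Longrightarrow> h < d \<Longrightarrow> f (x + h) < f x"
    using has_real_derivative_neg_dec_right[OF f] by force
  with x min[of "x + min d (b - x) / 2"] show False
    by (smt (verit, best) atLeastAtMost_iff field_sum_of_halves)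
qed

lemma has_real_derivative_nonpos_at_min_Icc:
  fixes f :: "real \<Rightarrow> real"
  assumes f: "(f has_real_derivative l) (at x within {a..b})"
    and x: "x \<in> {a..b}" "a < x"
    and min: "\<And>y. y \<in> {a..b} \<Longrightarrow> f x \<le> f y"
  shows "l \<le> 0"
proof (rule ccontr)
  assume "\<not> l \<le> 0"
  then obtain d where "d > 0"
    and d: "\<And>h. 0 < h \<Longrightarrow> x - h \<in> {a..b} \<Longrightarrow> h < d \<Longrightarrow> f (x - h) < f x"
    using has_real_derivative_pos_inc_left[OF f] by force
  with x min[of "x - min d (x - a) / 2"] show False
    by (smt (verit, best) atLeastAtMost_iff field_sum_of_halves)
qed

lemma second_derivative_nonneg_at_min_Icc:
  fixes f f1 :: "real \<Rightarrow> real"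
  assumes ab: "a < b" and x: "x \<in> {a..b}"
    and f: "\<And>y. y \<in> {a..b} \<Longrightarrow> (f has_real_derivative f1 y) (at y within {a..b})"
    and f1: "(f1 has_real_derivative f2) (at x within {a..b})"
    and crit: "f1 x = 0"
    and min: "\<And>y. y \<in> {a..b} \<Longrightarrow> f x \<le> f y"
  shows "0 \<le> f2"
proof (rule ccontr)
  assume neg: "\<not> 0 \<le> f2"
  have mvt: "\<exists>\<xi>\<in>{p<..<q}. f q - f p = f1 \<xi> * (q - p)" if "a \<le> p" "p < q" "q \<le> b" for p q
  proof (rule mvt_simple[OF \<open>p < q\<close>, of f "\<lambda>y h. f1 y * h"])
    fix y assume "p \<le> y" "y \<le> q"
    with that have "(f has_real_derivative f1 y) (at y within {p..q})"
      by (intro has_field_derivative_subset[OF f]) auto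
    then show "(f has_derivative (\<lambda>h. f1 y * h)) (at y within {p..q})"
      by (simp add: has_field_derivative_def)
  qed
  show False
  proof (cases "x < b")
    case True
    \<comment> \<open>\<open>f1\<close> vanishes at \<open>x\<close> and decreases there, so \<open>f\<close> decreases just to the right of \<open>x\<close>\<close>
    obtain d where "d > 0"
      and d: "\<And>h. 0 < h \<Longrightarrow> x + h \<in> {a..b} \<Longrightarrow> h < d \<Longrightarrow> f1 (x + h) < f1 x"
      using has_real_derivative_neg_dec_right[OF f1] neg by force
    define y where "y = x + min d (b - x) / 2"
    have y: "x < y" "y \<le> b" "y < x + d" using True \<open>d > 0\<close> by (auto simp: y_def min_def field_simps)
    then obtain \<xi> where \<xi>: "x < \<xi>" "\<xi> < y" "f y - f x = f1 \<xi> * (y - x)"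
      using mvt[of x y] x by auto
    have "f1 \<xi> < 0" using d[of "\<xi> - x"] \<xi> x y crit by auto
    with \<xi> y have "f y < f x" by (smt (verit) mult_neg_pos)
    with min[of y] x y show False by auto
  next
    case False
    obtain d where "d > 0"
      and d: "\<And>h. 0 < h \<Longrightarrow> x - h \<in> {a..b} \<Longrightarrow> h < d \<Longrightarrow> f1 x < f1 (x - h)"
      using has_real_derivative_neg_dec_left[OF f1] neg by force
    define y where "y = x - min d (x - a) / 2"
    have y: "y < x" "a \<le> y" "x - d < y" using False x ab \<open>d > 0\<close> by (auto simp: y_def min_def field_simps)
    then obtain \<xi> where \<xi>: "y < \<xi>" "\<xi> < x" "f x - f y = f1 \<xi> * (x - y)"
      using mvt[of y x] x by auto
    have "0 < f1 \<xi>" using d[of "x - \<xi>"] \<xi> x y crit by auto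
    with \<xi> y have "f y < f x" by (smt (verit) mult_pos_pos)
    with min[of y] x y show False by auto
  qed
qed

lemma continuous_on_Times_slice_snd:
  assumes "continuous_on (A \<times> B) (\<lambda>(t, x). f t x)" "t \<in> A"
  shows "continuous_on B (f t)"
proof -
  have "continuous_on B ((\<lambda>(t, x). f t x) \<circ> Pair t)"
    by (intro continuous_on_compose continuous_intros continuous_on_subset[OF assms(1)])
       (use assms(2) in auto)
  then show ?thesis by (simp add: o_def)
qed

lemma continuous_on_Times_slice_fst:
  assumes "continuous_on (A \<times> B) (\<lambda>(t, x). f t x)" "x \<in> B"
  shows "continuous_on A (\<lambda>t. f t x)"
proof -
  have "continuous_on A ((\<lambda>(t, x). f t x) \<circ> (\<lambda>t. (t, x)))"
    by (intro continuous_on_compose continuous_intros continuous_on_subset[OF assms(1)])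
       (use assms(2) in auto)
  then show ?thesis by (simp add: o_def)
qed

lemma continuous_on_Times_attains_min:
  fixes f :: "'a::topological_space \<Rightarrow> 'b::topological_space \<Rightarrow> real"
  assumes "continuous_on (A \<times> B) (\<lambda>(t, x). f t x)" "compact A" "compact B" "A \<noteq> {}" "B \<noteq> {}"
  obtains t0 x0 where "t0 \<in> A" "x0 \<in> B" "\<And>t x. t \<in> A \<Longrightarrow> x \<in> B \<Longrightarrow> f t0 x0 \<le> f t x"
proof -
  obtain p where "p \<in> A \<times> B" "\<forall>q\<in>A \<times> B. (\<lambda>(t, x). f t x) p \<le> (\<lambda>(t, x). f t x) q"
    using continuous_attains_inf[OF compact_Times[OF assms(2,3)] _ assms(1)] assms(4,5) by blast
  then show thesis by (intro that[of "fst p" "snd p"]) (auto simp: case_prod_beta)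
qed

lemma continuous_on_Times_bounded:
  fixes f :: "'a::topological_space \<Rightarrow> 'b::topological_space \<Rightarrow> real"
  assumes "continuous_on (A \<times> B) (\<lambda>(t, x). f t x)" "compact A" "compact B"
  obtains K where "K \<ge> 0" "\<And>t x. t \<in> A \<Longrightarrow> x \<in> B \<Longrightarrow> \<bar>f t x\<bar> \<le> K"
proof -
  have "bounded ((\<lambda>(t, x). f t x) ` (A \<times> B))"
    by (intro compact_imp_bounded compact_continuous_image assms(1) compact_Times assms(2,3))
  then obtain K where "\<And>t x. t \<in> A \<Longrightarrow> x \<in> B \<Longrightarrow> \<bar>f t x\<bar> \<le> K"
    by (force simp: bounded_real)
  then show thesis by (intro that[of "max K 0"]) force+
qed

lemma nonneg_on_Icc_if_nonneg_on_Ioo: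
  fixes f :: "real \<Rightarrow> real"
  assumes "continuous_on {a..b} f" "a < b" "\<And>s. a < s \<Longrightarrow> s < b \<Longrightarrow> 0 \<le> f s" "t \<in> {a..b}"
  shows "0 \<le> f t"
  by (rule continuous_ge_on_closure[of "{a<..<b}"]) (use assms in auto)

lemma has_real_derivative_parametric_integral:
  fixes f fs :: "real \<Rightarrow> real \<Rightarrow> real"
  assumes f: "\<And>s x. s \<in> {a..b} \<Longrightarrow> x \<in> {c..d} \<Longrightarrow>
      ((\<lambda>s. f s x) has_real_derivative fs s x) (at s within {a..b})"
    and cont_f: "continuous_on ({a..b} \<times> {c..d}) (\<lambda>(s, x). f s x)"
    and cont_fs: "continuous_on ({a..b} \<times> {c..d}) (\<lambda>(s, x). fs s x)"
    and t: "t \<in> {a..b}"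
  shows "((\<lambda>s. integral {c..d} (f s)) has_real_derivative integral {c..d} (fs t))
    (at t within {a..b})"
  using leibniz_rule_field_derivative[of "{a..b}" c d f fs t] assms
    integrable_continuous_interval[OF continuous_on_Times_slice_snd[OF cont_f]]
  by auto

lemma integral_sq_le_integral_weighted_sq:
  fixes f w :: "real \<Rightarrow> real"
  assumes "continuous_on {a..b} f" "continuous_on {a..b} w"
    and "\<And>x. x \<in> {a..b} \<Longrightarrow> 0 \<le> w x" "integral {a..b} w = 1"
  shows "(integral {a..b} (\<lambda>x. f x * w x))\<^sup>2 \<le> integral {a..b} (\<lambda>x. w x * (f x)\<^sup>2)"
proof -
  define M where "M = integral {a..b} (\<lambda>x. f x * w x)"
  have "(w has_integral 1) {a..b}"
    using integrable_integral[OF integrable_continuous_interval[OF assms(2)]] assms(4) by simp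
  have "((\<lambda>x. w x * (f x)\<^sup>2 - 2 * M * (f x * w x) + M\<^sup>2 * w x) has_integral
      integral {a..b} (\<lambda>x. w x * (f x)\<^sup>2) - 2 * M * M + M\<^sup>2 * 1) {a..b}"
    unfolding M_def using assms
    by (intro has_integral_add has_integral_diff has_integral_mult_right integrable_integral
        integrable_continuous_interval continuous_intros \<open>(w has_integral 1) {a..b}\<close>) auto
  moreover have "(\<lambda>x. w x * (f x)\<^sup>2 - 2 * M * (f x * w x) + M\<^sup>2 * w x) = (\<lambda>x. w x * (f x - M)\<^sup>2)"
    by (simp add: fun_eq_iff power2_eq_square algebra_simps)
  ultimately have "((\<lambda>x. w x * (f x - M)\<^sup>2) has_integral
      integral {a..b} (\<lambda>x. w x * (f x)\<^sup>2) - M\<^sup>2) {a..b}"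
    by (simp add: power2_eq_square)
  then have "0 \<le> integral {a..b} (\<lambda>x. w x * (f x)\<^sup>2) - M\<^sup>2"
    by (rule has_integral_nonneg) (use assms(3) in auto)
  then show ?thesis by (simp add: M_def)
qed

lemma integral_mult_density_le:
  fixes f w :: "real \<Rightarrow> real"
  assumes "continuous_on {a..b} f" "continuous_on {a..b} w"
    and "\<And>x. x \<in> {a..b} \<Longrightarrow> 0 \<le> w x" "integral {a..b} w = 1"
    and "\<And>x. x \<in> {a..b} \<Longrightarrow> f x \<le> B"
  shows "integral {a..b} (\<lambda>x. f x * w x) \<le> B"
proof -
  have "integral {a..b} (\<lambda>x. f x * w x) \<le> integral {a..b} (\<lambda>x. B * w x)"
    using assms by (intro integral_le integrable_continuous_interval continuous_intros mult_right_mono)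
      auto
  also have "\<dots> = B" using assms(4) by simp
  finally show ?thesis .
qed

lemma square_convex_combination_le:
  fixes b c a :: real
  assumes "0 \<le> b" "0 \<le> c" "b + c = 1"
  shows "(b + c * a)\<^sup>2 \<le> b + c * a\<^sup>2"
proof -
  have c: "c = 1 - b" using assms(3) by simp
  have "b + c * a\<^sup>2 - (b + c * a)\<^sup>2 = b * c * (1 - a)\<^sup>2"
    unfolding c by (simp add: power2_eq_square algebra_simps)
  moreover have "0 \<le> b * c * (1 - a)\<^sup>2" using assms(1,2) by simp
  ultimately show ?thesis by linarith
qed

section \<open>Minima of functions with a Gaussian weight\<close>

definition gauss_weight :: "real \<Rightarrow> real \<Rightarrow> real \<Rightarrow> real" where
  "gauss_weight K c y = exp (- K * (y - c)\<^sup>2)"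

lemma gauss_weight_pos: "0 < gauss_weight K c y"
  by (simp add: gauss_weight_def)

lemma has_real_derivative_gauss_weight_mult:
  assumes "(f has_real_derivative f1) (at x within S)"
  shows "((\<lambda>y. gauss_weight K c y * f y) has_real_derivative
           gauss_weight K c x * (f1 - 2 * K * (x - c) * f x)) (at x within S)"
  unfolding gauss_weight_def
  by (rule derivative_eq_intros assms refl | simp)+ (simp add: algebra_simps)

lemma gauss_weight_mult_min_left:
  fixes f :: "real \<Rightarrow> real"
  assumes "(f has_real_derivative f1) (at a within {a..b})" "a < b"
    and "\<And>y. y \<in> {a..b} \<Longrightarrow> gauss_weight K c a * f a \<le> gauss_weight K c y * f y"
  shows "2 * K * (a - c) * f a \<le> f1"
proof -
  have "0 \<le> gauss_weight K c a * (f1 - 2 * K * (a - c) * f a)"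
    by (rule has_real_derivative_nonneg_at_min_Icc[OF has_real_derivative_gauss_weight_mult[OF assms(1)]])
       (use assms(2,3) in auto)
  then show ?thesis using gauss_weight_pos[of K c a] by (simp add: zero_le_mult_iff)
qed

lemma gauss_weight_mult_min_right:
  fixes f :: "real \<Rightarrow> real"
  assumes "(f has_real_derivative f1) (at b within {a..b})" "a < b"
    and "\<And>y. y \<in> {a..b} \<Longrightarrow> gauss_weight K c b * f b \<le> gauss_weight K c y * f y"
  shows "f1 \<le> 2 * K * (b - c) * f b"
proof -
  have "gauss_weight K c b * (f1 - 2 * K * (b - c) * f b) \<le> 0"
    by (rule has_real_derivative_nonpos_at_min_Icc[OF has_real_derivative_gauss_weight_mult[OF assms(1)]])
       (use assms(2,3) in auto)
  then show ?thesis using gauss_weight_pos[of K c b] by (simp add: mult_le_0_iff)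
qed

lemma gauss_weight_mult_min_interior:
  fixes f f1 :: "real \<Rightarrow> real"
  assumes x: "a < x" "x < b"
    and f: "\<And>y. y \<in> {a..b} \<Longrightarrow> (f has_real_derivative f1 y) (at y within {a..b})"
    and f1: "(f1 has_real_derivative f2) (at x within {a..b})"
    and min: "\<And>y. y \<in> {a..b} \<Longrightarrow> gauss_weight K c x * f x \<le> gauss_weight K c y * f y"
  shows "f1 x = 2 * K * (x - c) * f x" and "((2 * K * (x - c))\<^sup>2 + 2 * K) * f x \<le> f2"
proof -
  let ?w = "gauss_weight K c"
  define g where "g y = f1 y - 2 * K * (y - c) * f y" for y
  have x_in: "x \<in> {a..b}" using x by auto
  have d: "((\<lambda>y. ?w y * f y) has_real_derivative ?w y * g y) (at y within {a..b})"
    if "y \<in> {a..b}" for y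
    unfolding g_def by (rule has_real_derivative_gauss_weight_mult[OF f[OF that]])
  have "0 \<le> ?w x * g x" "?w x * g x \<le> 0"
    using has_real_derivative_nonneg_at_min_Icc[OF d] has_real_derivative_nonpos_at_min_Icc[OF d]
      x_in x min by auto
  then have "g x = 0" using gauss_weight_pos[of K c x] by (simp add: mult_le_0_iff zero_le_mult_iff)
  then show f1x: "f1 x = 2 * K * (x - c) * f x" by (simp add: g_def)
  have "(g has_real_derivative f2 - 2 * K * f x - 2 * K * (x - c) * f1 x) (at x within {a..b})"
    unfolding g_def[abs_def]
    by (rule derivative_eq_intros f1 f[OF x_in] refl | simp)+
  from has_real_derivative_gauss_weight_mult[OF this]
  have "((\<lambda>y. ?w y * g y) has_real_derivative ?w x * (f2 - 2 * K * f x - 2 * K * (x - c) * f1 x))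
      (at x within {a..b})"
    using \<open>g x = 0\<close> by simp
  from second_derivative_nonneg_at_min_Icc[OF _ x_in d this]
  have "0 \<le> ?w x * (f2 - 2 * K * f x - 2 * K * (x - c) * f1 x)"
    using \<open>g x = 0\<close> x min by auto
  then have "0 \<le> f2 - 2 * K * f x - 2 * K * (x - c) * f1 x"
    using gauss_weight_pos[of K c x] by (simp add: zero_le_mult_iff)
  then show "((2 * K * (x - c))\<^sup>2 + 2 * K) * f x \<le> f2"
    unfolding f1x by (simp add: power2_eq_square algebra_simps)
qed

section \<open>Classical solutions of the mean field game system\<close>

locale mfg_classical_solution =
  fixes L T \<sigma> r b c :: real and uT m0 :: "real \<Rightarrow> real"
    and u ut ux uxx m mt mx mxx :: "real \<Rightarrow> real \<Rightarrow> real"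
  assumes L_pos: "0 < L" and T_pos: "0 < T" and \<sigma>_pos: "0 < \<sigma>" and r_pos: "0 < r"
    and b_pos: "0 < b" and c_nonneg: "0 \<le> c" and b_plus_c: "b + c = 1"
    and solution: "mfg_solution L T \<sigma> r b c uT m0 u ut ux uxx m mt mx mxx"
    and m0_density: "prob_density L m0"
    and uT_nonneg: "\<forall>x\<in>{0..L}. 0 \<le> uT x"
begin

abbreviation "G \<equiv> Gterm L b c ux m"
abbreviation "mean_ux t \<equiv> integral {0..L} (\<lambda>y. ux t y * m t y)"

lemma G_eq: "G t x = (b + c * mean_ux t - ux t x) / 2"
  by (simp add: Gterm_def)

lemma
  assumes "t \<in> {0..T}" "x \<in> {0..L}"
  shows du_t: "((\<lambda>s. u s x) has_real_derivative ut t x) (at t within {0..T})"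
    and du_x: "((\<lambda>y. u t y) has_real_derivative ux t x) (at x within {0..L})"
    and dux_x: "((\<lambda>y. ux t y) has_real_derivative uxx t x) (at x within {0..L})"
    and dm_t: "((\<lambda>s. m s x) has_real_derivative mt t x) (at t within {0..T})"
    and dm_x: "((\<lambda>y. m t y) has_real_derivative mx t x) (at x within {0..L})"
    and dmx_x: "((\<lambda>y. mx t y) has_real_derivative mxx t x) (at x within {0..L})"
  using solution assms unfolding mfg_solution_def by blast+

lemma
  shows cont_u: "continuous_on ({0..T} \<times> {0..L}) (\<lambda>(t, x). u t x)"
    and cont_ut: "continuous_on ({0..T} \<times> {0..L}) (\<lambda>(t, x). ut t x)"
    and cont_ux: "continuous_on ({0..T} \<times> {0..L}) (\<lambda>(t, x). ux t x)"
    and cont_uxx: "continuous_on ({0..T} \<times> {0..L}) (\<lambda>(t, x). uxx t x)"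
    and cont_m: "continuous_on ({0..T} \<times> {0..L}) (\<lambda>(t, x). m t x)"
    and cont_mt: "continuous_on ({0..T} \<times> {0..L}) (\<lambda>(t, x). mt t x)"
    and cont_mx: "continuous_on ({0..T} \<times> {0..L}) (\<lambda>(t, x). mx t x)"
  using solution unfolding mfg_solution_def by blast+

lemma hjb:
  "0 < t \<Longrightarrow> t < T \<Longrightarrow> 0 < x \<Longrightarrow> x < L \<Longrightarrow>
    ut t x + \<sigma>\<^sup>2 / 2 * uxx t x - r * u t x + (G t x)\<^sup>2 = 0"
  using solution unfolding mfg_solution_def by blast

lemma fokker_planck:
  "0 < t \<Longrightarrow> t < T \<Longrightarrow> 0 < x \<Longrightarrow> x < L \<Longrightarrow>
    \<exists>D. ((\<lambda>y. G t y * m t y) has_real_derivative D) (at x) \<and> mt t x - \<sigma>\<^sup>2 / 2 * mxx t x - D = 0"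
  using solution unfolding mfg_solution_def by blast

lemma initial: "x \<in> {0..L} \<Longrightarrow> m 0 x = m0 x"
  and terminal: "x \<in> {0..L} \<Longrightarrow> u T x = uT x"
  using solution unfolding mfg_solution_def by blast+

lemma neumann: "t \<in> {0..T} \<Longrightarrow> ux t 0 = 0" "t \<in> {0..T} \<Longrightarrow> ux t L = 0"
  using solution unfolding mfg_solution_def by blast+

lemma no_flux:
  "t \<in> {0..T} \<Longrightarrow> \<sigma>\<^sup>2 / 2 * mx t 0 + G t 0 * m t 0 = 0"
  "t \<in> {0..T} \<Longrightarrow> \<sigma>\<^sup>2 / 2 * mx t L + G t L * m t L = 0"
  using solution unfolding mfg_solution_def by blast+

lemma cont_slice:
  assumes "t \<in> {0..T}"
  shows "continuous_on {0..L} (u t)" "continuous_on {0..L} (ut t)" "continuous_on {0..L} (ux t)"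
    "continuous_on {0..L} (uxx t)" "continuous_on {0..L} (m t)" "continuous_on {0..L} (mx t)"
  using continuous_on_Times_slice_snd[OF cont_u assms] continuous_on_Times_slice_snd[OF cont_ut assms]
    continuous_on_Times_slice_snd[OF cont_ux assms] continuous_on_Times_slice_snd[OF cont_uxx assms]
    continuous_on_Times_slice_snd[OF cont_m assms] continuous_on_Times_slice_snd[OF cont_mx assms]
  by auto

lemma dG_x:
  assumes "t \<in> {0..T}" "x \<in> {0..L}"
  shows "((\<lambda>y. G t y) has_real_derivative - uxx t x / 2) (at x within {0..L})"
  unfolding Gterm_def by (rule derivative_eq_intros dux_x[OF assms] | simp)+

lemma cont_G: "t \<in> {0..T} \<Longrightarrow> continuous_on {0..L} (\<lambda>y. G t y)"
  unfolding Gterm_def by (intro continuous_intros cont_slice) auto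

lemma hjb_Icc:
  assumes t: "0 < t" "t < T" and x: "x \<in> {0..L}"
  shows "ut t x + \<sigma>\<^sup>2 / 2 * uxx t x - r * u t x + (G t x)\<^sup>2 = 0"
proof -
  let ?h = "\<lambda>x. ut t x + \<sigma>\<^sup>2 / 2 * uxx t x - r * u t x + (G t x)\<^sup>2"
  have "continuous_on {0..L} ?h"
    using t by (intro continuous_intros cont_slice cont_G) auto
  then show ?thesis
    using continuous_constant_on_closure[of "{0<..<L}" ?h 0 x] hjb t x L_pos by auto
qed

lemma u_nonneg_on_later_times:
  assumes t: "0 < t" "t \<le> T"
  shows "\<forall>s\<in>{t..T}. \<forall>x\<in>{0..L}. 0 \<le> u s x"
proof -
  have "continuous_on ({t..T} \<times> {0..L}) (\<lambda>(s, x). u s x)"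
    by (rule continuous_on_subset[OF cont_u]) (use t in auto)
  then obtain t0 x0 where t0: "t0 \<in> {t..T}" and x0: "x0 \<in> {0..L}"
    and min: "\<And>s x. s \<in> {t..T} \<Longrightarrow> x \<in> {0..L} \<Longrightarrow> u t0 x0 \<le> u s x"
    by (rule continuous_on_Times_attains_min) (use t L_pos in auto)
  have t0_in: "t0 \<in> {0..T}" using t0 t by auto
  have "0 \<le> u t0 x0"
  proof (rule ccontr)
    assume neg: "\<not> 0 \<le> u t0 x0"
    have "t0 < T" using neg terminal[OF x0] uT_nonneg x0 t0 by (cases "t0 = T") auto
    have "0 \<le> ut t0 x0"
      by (rule has_real_derivative_nonneg_at_min_Icc
          [OF has_field_derivative_subset[OF du_t[OF t0_in x0]]])
         (use t0 t \<open>t0 < T\<close> x0 min in auto)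
    have crit: "ux t0 x0 = 0"
    proof (cases "x0 = 0 \<or> x0 = L")
      case False
      then have "0 \<le> ux t0 x0" "ux t0 x0 \<le> 0"
        using has_real_derivative_nonneg_at_min_Icc[OF du_x[OF t0_in x0]]
          has_real_derivative_nonpos_at_min_Icc[OF du_x[OF t0_in x0]] x0 t0 min by auto
      then show ?thesis by simp
    qed (use neumann t0_in in auto)
    have "0 \<le> uxx t0 x0"
      by (rule second_derivative_nonneg_at_min_Icc[OF L_pos x0 du_x[OF t0_in] dux_x[OF t0_in x0] crit])
         (use t0 min in auto)
    then have "0 \<le> \<sigma>\<^sup>2 / 2 * uxx t0 x0" by simp
    moreover have "0 < - r * u t0 x0" using neg r_pos by (simp add: mult_pos_neg)
    ultimately show False
      using hjb_Icc[OF _ \<open>t0 < T\<close> x0] \<open>0 \<le> ut t0 x0\<close> t t0 zero_le_power2[of "G t0 x0"]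
      by force
  qed
  then show ?thesis using min by (meson order_trans)
qed

lemma u_nonneg:
  assumes "t \<in> {0..T}" "x \<in> {0..L}"
  shows "0 \<le> u t x"
proof (rule nonneg_on_Icc_if_nonneg_on_Ioo
    [OF continuous_on_Times_slice_fst[OF cont_u assms(2)] T_pos _ assms(1)])
  fix s assume "0 < s" "s < T"
  then show "0 \<le> u s x" using u_nonneg_on_later_times[of s] assms(2) by auto
qed

lemma G_bounded:
  obtains B where "0 \<le> B" "\<And>t x. t \<in> {0..T} \<Longrightarrow> x \<in> {0..L} \<Longrightarrow> \<bar>G t x\<bar> \<le> B"
proof -
  obtain B1 where B1: "0 \<le> B1" "\<And>t x. t \<in> {0..T} \<Longrightarrow> x \<in> {0..L} \<Longrightarrow> \<bar>ux t x\<bar> \<le> B1"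
    using continuous_on_Times_bounded[OF cont_ux] by blast
  have "continuous_on ({0..T} \<times> {0..L}) (\<lambda>(t, x). ux t x * m t x)"
    using continuous_on_mult[OF cont_ux cont_m] by (simp add: case_prod_unfold)
  then obtain B2 where B2: "0 \<le> B2" "\<And>t x. t \<in> {0..T} \<Longrightarrow> x \<in> {0..L} \<Longrightarrow> \<bar>ux t x * m t x\<bar> \<le> B2"
    using continuous_on_Times_bounded by blast
  have mean: "\<bar>mean_ux t\<bar> \<le> B2 * L" if t: "t \<in> {0..T}" for t
  proof -
    have "((\<lambda>y. ux t y * m t y) has_integral mean_ux t) {0..L}"
      by (intro integrable_integral integrable_continuous_interval continuous_intros cont_slice[OF t])
    from has_integral_bound_real[OF B2(1) finite.emptyI this] B2(2)[OF t] L_pos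
    show ?thesis by simp
  qed
  show thesis
  proof (rule that)
    show "0 \<le> (b + c * (B2 * L) + B1) / 2" using b_pos c_nonneg B1 B2 L_pos by simp
    fix t x assume tx: "t \<in> {0..T}" "x \<in> {0..L}"
    have "\<bar>c * mean_ux t\<bar> \<le> c * (B2 * L)"
      using mean[OF tx(1)] c_nonneg by (simp add: abs_mult mult_left_mono)
    then show "\<bar>G t x\<bar> \<le> (b + c * (B2 * L) + B1) / 2"
      using B1(2)[OF tx] b_pos unfolding G_eq by (simp add: abs_le_iff)
  qed
qed

lemma fokker_planck_expanded:
  assumes t: "0 < t" "t < T" and x: "0 < x" "x < L"
  shows "mt t x = \<sigma>\<^sup>2 / 2 * mxx t x - uxx t x / 2 * m t x + G t x * mx t x"
proof -
  have tx: "t \<in> {0..T}" "x \<in> {0..L}" using t x by auto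
  obtain D where D: "((\<lambda>y. G t y * m t y) has_real_derivative D) (at x)"
    and "mt t x - \<sigma>\<^sup>2 / 2 * mxx t x - D = 0"
    using fokker_planck[OF t x] by blast
  have "((\<lambda>y. G t y * m t y) has_real_derivative - uxx t x / 2 * m t x + G t x * mx t x)
      (at x within {0..L})"
    by (rule derivative_eq_intros dG_x[OF tx] dm_x[OF tx] | simp)+
  then have "((\<lambda>y. G t y * m t y) has_real_derivative - uxx t x / 2 * m t x + G t x * mx t x) (at x)"
    using at_within_Icc_at[of 0 x L] x by simp
  with D \<open>mt t x - \<sigma>\<^sup>2 / 2 * mxx t x - D = 0\<close> show ?thesis
    using DERIV_unique by fastforce
qed

lemma m_nonneg_at_weighted_min_left:
  assumes t: "t \<in> {0..T}" and K: "\<bar>G t 0\<bar> < \<sigma>\<^sup>2 / 2 * (K * L)"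
    and min: "\<And>y. y \<in> {0..L} \<Longrightarrow>
      gauss_weight K (L / 2) 0 * m t 0 \<le> gauss_weight K (L / 2) y * m t y"
  shows "0 \<le> m t 0"
proof -
  have "2 * K * (0 - L / 2) * m t 0 \<le> mx t 0"
    using gauss_weight_mult_min_left[OF dm_x[OF t] L_pos min] L_pos by simp
  then have "0 \<le> \<sigma>\<^sup>2 / 2 * (mx t 0 + K * L * m t 0)" by simp
  also have "\<dots> = (\<sigma>\<^sup>2 / 2 * (K * L) - G t 0) * m t 0"
    using no_flux(1)[OF t] by (simp add: algebra_simps)
  finally have "0 \<le> (\<sigma>\<^sup>2 / 2 * (K * L) - G t 0) * m t 0" .
  moreover have "0 < \<sigma>\<^sup>2 / 2 * (K * L) - G t 0" using K by (simp add: abs_less_iff)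
  ultimately show ?thesis by (simp add: zero_le_mult_iff)
qed

lemma m_nonneg_at_weighted_min_right:
  assumes t: "t \<in> {0..T}" and K: "\<bar>G t L\<bar> < \<sigma>\<^sup>2 / 2 * (K * L)"
    and min: "\<And>y. y \<in> {0..L} \<Longrightarrow>
      gauss_weight K (L / 2) L * m t L \<le> gauss_weight K (L / 2) y * m t y"
  shows "0 \<le> m t L"
proof -
  have "mx t L \<le> 2 * K * (L - L / 2) * m t L"
    using gauss_weight_mult_min_right[OF dm_x[OF t] L_pos min] L_pos by simp
  then have "0 \<le> \<sigma>\<^sup>2 / 2 * (K * L * m t L - mx t L)" by simp
  also have "\<dots> = (\<sigma>\<^sup>2 / 2 * (K * L) + G t L) * m t L"
    using no_flux(2)[OF t] by (simp add: algebra_simps)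
  finally have "0 \<le> (\<sigma>\<^sup>2 / 2 * (K * L) + G t L) * m t L" .
  moreover have "0 < \<sigma>\<^sup>2 / 2 * (K * L) + G t L" using K by (simp add: abs_less_iff)
  ultimately show ?thesis by (simp add: zero_le_mult_iff)
qed

lemma m_nonneg_at_weighted_min_interior:
  assumes t: "0 < t" "t < T" and x: "0 < x" "x < L" and K: "0 < K"
    and \<omega>: "\<sigma>\<^sup>2 / 2 * ((K * L)\<^sup>2 + 2 * K) + \<bar>uxx t x\<bar> / 2 + \<bar>G t x\<bar> * (K * L) < \<omega>"
    and min_x: "\<And>y. y \<in> {0..L} \<Longrightarrow>
      gauss_weight K (L / 2) x * m t x \<le> gauss_weight K (L / 2) y * m t y"
    and min_t: "\<And>s. s \<in> {0..t} \<Longrightarrow> exp (- \<omega> * t) * m t x \<le> exp (- \<omega> * s) * m s x"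
  shows "0 \<le> m t x"
proof (rule ccontr)
  assume "\<not> 0 \<le> m t x"
  then have neg: "m t x < 0" by simp
  have tx: "t \<in> {0..T}" "x \<in> {0..L}" using t x by auto
  define p where "p = 2 * K * (x - L / 2)"
  have mx: "mx t x = p * m t x" and mxx: "(p\<^sup>2 + 2 * K) * m t x \<le> mxx t x"
    using gauss_weight_mult_min_interior[OF x dm_x[of t] dmx_x[OF tx] min_x] tx(1)
    by (auto simp: p_def)
  have "((\<lambda>s. m s x) has_real_derivative mt t x) (at t within {0..t})"
    using has_field_derivative_subset[OF dm_t[OF tx]] t by auto
  then have "((\<lambda>s. exp (- \<omega> * s) * m s x) has_real_derivative exp (- \<omega> * t) * (mt t x - \<omega> * m t x))
      (at t within {0..t})"
    by (auto intro!: derivative_eq_intros simp: algebra_simps)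
  from has_real_derivative_nonpos_at_min_Icc[OF this] t min_t
  have "mt t x \<le> \<omega> * m t x" by (simp add: mult_le_0_iff)
  define \<kappa> where "\<kappa> = \<sigma>\<^sup>2 / 2 * (p\<^sup>2 + 2 * K) - uxx t x / 2 + G t x * p"
  have "\<sigma>\<^sup>2 / 2 * ((p\<^sup>2 + 2 * K) * m t x) \<le> \<sigma>\<^sup>2 / 2 * mxx t x"
    using mult_left_mono[OF mxx, of "\<sigma>\<^sup>2 / 2"] by simp
  moreover have "\<kappa> * m t x = \<sigma>\<^sup>2 / 2 * ((p\<^sup>2 + 2 * K) * m t x) - uxx t x / 2 * m t x + G t x * (p * m t x)"
    by (simp add: \<kappa>_def algebra_simps)
  ultimately have "\<kappa> * m t x \<le> mt t x"
    using fokker_planck_expanded[OF t x] unfolding mx by linarith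
  have "\<bar>p\<bar> \<le> K * L" using x K by (auto simp: p_def abs_mult abs_le_iff algebra_simps)
  then have "p\<^sup>2 \<le> (K * L)\<^sup>2"
    by (metis abs_ge_zero abs_le_square_iff abs_of_nonneg order_trans)
  have "G t x * p \<le> \<bar>G t x\<bar> * (K * L)"
    using mult_mono[OF order_refl \<open>\<bar>p\<bar> \<le> K * L\<close>, of "\<bar>G t x\<bar>"] abs_ge_self[of "G t x * p"]
    by (simp add: abs_mult)
  have "\<sigma>\<^sup>2 / 2 * (p\<^sup>2 + 2 * K) \<le> \<sigma>\<^sup>2 / 2 * ((K * L)\<^sup>2 + 2 * K)"
    using \<open>p\<^sup>2 \<le> (K * L)\<^sup>2\<close> by (intro mult_left_mono) auto
  then have "\<kappa> < \<omega>"
    using \<omega> \<open>G t x * p \<le> \<bar>G t x\<bar> * (K * L)\<close> unfolding \<kappa>_def by (simp add: abs_le_iff)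
  then have "(\<kappa> - \<omega>) * m t x > 0" using neg by (simp add: mult_neg_neg)
  with \<open>\<kappa> * m t x \<le> mt t x\<close> \<open>mt t x \<le> \<omega> * m t x\<close> show False
    by (simp add: algebra_simps)
qed

lemma m_nonneg_at_weighted_min:
  assumes t: "0 \<le> t" "t < T" and x: "x \<in> {0..L}" and K: "0 < K"
    and G_lt: "\<And>y. y \<in> {0..L} \<Longrightarrow> \<bar>G t y\<bar> < \<sigma>\<^sup>2 / 2 * (K * L)"
    and \<omega>: "\<sigma>\<^sup>2 / 2 * ((K * L)\<^sup>2 + 2 * K) + \<bar>uxx t x\<bar> / 2 + \<bar>G t x\<bar> * (K * L) < \<omega>"
    and min_x: "\<And>y. y \<in> {0..L} \<Longrightarrow>
      gauss_weight K (L / 2) x * m t x \<le> gauss_weight K (L / 2) y * m t y"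
    and min_t: "\<And>s. s \<in> {0..t} \<Longrightarrow> exp (- \<omega> * t) * m t x \<le> exp (- \<omega> * s) * m s x"
  shows "0 \<le> m t x"
proof (cases "t = 0")
  case True
  then show ?thesis using initial[OF x] m0_density x by (simp add: prob_density_def)
next
  case False
  have t_in: "t \<in> {0..T}" using t by simp
  consider "x = 0" | "x = L" | "0 < x \<and> x < L" using x by fastforce
  then show ?thesis
  proof cases
    case 1
    have "0 \<le> m t 0"
      by (rule m_nonneg_at_weighted_min_left[OF t_in]) (use G_lt min_x 1 L_pos in auto)
    then show ?thesis using 1 by simp
  next
    case 2
    have "0 \<le> m t L"
      by (rule m_nonneg_at_weighted_min_right[OF t_in]) (use G_lt min_x 2 L_pos in auto)
    then show ?thesis using 2 by simp
  next
    case 3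
    then show ?thesis
      using m_nonneg_at_weighted_min_interior[OF _ _ _ _ K \<omega> min_x min_t] False t by auto
  qed
qed

lemma m_nonneg_on_earlier_times:
  assumes t1: "0 \<le> t1" "t1 < T"
  shows "\<forall>s\<in>{0..t1}. \<forall>x\<in>{0..L}. 0 \<le> m s x"
proof -
  obtain B where B: "0 \<le> B" "\<And>t x. t \<in> {0..T} \<Longrightarrow> x \<in> {0..L} \<Longrightarrow> \<bar>G t x\<bar> \<le> B"
    using G_bounded by blast
  obtain M where M: "0 \<le> M" "\<And>t x. t \<in> {0..T} \<Longrightarrow> x \<in> {0..L} \<Longrightarrow> \<bar>uxx t x\<bar> \<le> M"
    using continuous_on_Times_bounded[OF cont_uxx] by blast
  \<comment> \<open>\<open>K\<close> makes the slope of the weight dominate \<open>G\<close> at the boundary, \<open>\<omega>\<close> dominates the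
    zeroth-order coefficient of the equation satisfied by the weighted density\<close>
  define K where "K = 2 * (B + 1) / (\<sigma>\<^sup>2 * L)"
  have "0 < K" using B \<sigma>_pos L_pos by (simp add: K_def)
  have KL: "\<sigma>\<^sup>2 / 2 * (K * L) = B + 1" using \<sigma>_pos L_pos by (simp add: K_def field_simps)
  define \<omega> where "\<omega> = \<sigma>\<^sup>2 / 2 * ((K * L)\<^sup>2 + 2 * K) + M / 2 + B * (K * L) + 1"
  define Y where "Y s y = exp (- \<omega> * s) * (gauss_weight K (L / 2) y * m s y)" for s y
  have "continuous_on ({0..t1} \<times> {0..L}) (\<lambda>(s, y). m s y)"
    by (rule continuous_on_subset[OF cont_m]) (use t1 in auto)
  then have "continuous_on ({0..t1} \<times> {0..L}) (\<lambda>(s, y). Y s y)"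
    unfolding Y_def gauss_weight_def case_prod_unfold by (intro continuous_intros)
  then obtain t0 x0 where t0: "t0 \<in> {0..t1}" and x0: "x0 \<in> {0..L}"
    and min: "\<And>s y. s \<in> {0..t1} \<Longrightarrow> y \<in> {0..L} \<Longrightarrow> Y t0 x0 \<le> Y s y"
    by (rule continuous_on_Times_attains_min) (use t1 L_pos in auto)
  have t0_in: "t0 \<in> {0..T}" using t0 t1 by auto
  have "0 \<le> m t0 x0"
  proof (rule m_nonneg_at_weighted_min[OF _ _ x0 \<open>0 < K\<close>])
    show "\<bar>G t0 y\<bar> < \<sigma>\<^sup>2 / 2 * (K * L)" if "y \<in> {0..L}" for y
      using B(2)[OF t0_in that] KL by simp
    have "\<bar>uxx t0 x0\<bar> / 2 + \<bar>G t0 x0\<bar> * (K * L) \<le> M / 2 + B * (K * L)"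
      using M(2)[OF t0_in x0] B(2)[OF t0_in x0] \<open>0 < K\<close> L_pos
      by (intro add_mono mult_right_mono) auto
    then show "\<sigma>\<^sup>2 / 2 * ((K * L)\<^sup>2 + 2 * K) + \<bar>uxx t0 x0\<bar> / 2 + \<bar>G t0 x0\<bar> * (K * L) < \<omega>"
      unfolding \<omega>_def by linarith
    show "gauss_weight K (L / 2) x0 * m t0 x0 \<le> gauss_weight K (L / 2) y * m t0 y"
      if "y \<in> {0..L}" for y
      using min[OF t0 that] by (simp add: Y_def)
    show "exp (- \<omega> * t0) * m t0 x0 \<le> exp (- \<omega> * s) * m s x0" if "s \<in> {0..t0}" for s
      using min[of s x0] that t0 x0 gauss_weight_pos[of K "L / 2" x0]
      by (simp add: Y_def mult.left_commute[of "exp _"])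
  qed (use t0 t1 in auto)
  then have "0 \<le> Y t0 x0" using gauss_weight_pos[of K "L / 2" x0] by (simp add: Y_def)
  have "0 \<le> m s y" if "s \<in> {0..t1}" "y \<in> {0..L}" for s y
  proof -
    have "0 \<le> exp (- \<omega> * s) * (gauss_weight K (L / 2) y * m s y)"
      using min[OF that] \<open>0 \<le> Y t0 x0\<close> unfolding Y_def by linarith
    then show ?thesis using gauss_weight_pos[of K "L / 2" y] by (simp add: zero_le_mult_iff)
  qed
  then show ?thesis by blast
qed

lemma m_nonneg:
  assumes "t \<in> {0..T}" "x \<in> {0..L}"
  shows "0 \<le> m t x"
proof (rule nonneg_on_Icc_if_nonneg_on_Ioo
    [OF continuous_on_Times_slice_fst[OF cont_m assms(2)] T_pos _ assms(1)])
  fix s assume "0 < s" "s < T"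
  then show "0 \<le> m s x" using m_nonneg_on_earlier_times[of s] assms(2) by auto
qed

lemma integral_mt_eq_0:
  assumes t: "0 < t" "t < T"
  shows "integral {0..L} (mt t) = 0"
proof -
  have t_in: "t \<in> {0..T}" using t by simp
  let ?F = "\<lambda>x. \<sigma>\<^sup>2 / 2 * mx t x + G t x * m t x"
  have "(mt t has_integral ?F L - ?F 0) {0..L}"
  proof (rule fundamental_theorem_of_calculus_interior)
    show "continuous_on {0..L} ?F"
      using t_in by (intro continuous_intros cont_slice cont_G)
    fix x assume x: "x \<in> {0<..<L}"
    then have x_in: "x \<in> {0..L}" by simp
    obtain D where D: "((\<lambda>y. G t y * m t y) has_real_derivative D) (at x)"
      and "mt t x - \<sigma>\<^sup>2 / 2 * mxx t x - D = 0"
      using fokker_planck[OF t] x by auto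
    moreover have "((\<lambda>y. mx t y) has_real_derivative mxx t x) (at x)"
      using dmx_x[OF t_in x_in] at_within_Icc_at[of 0 x L] x by simp
    ultimately have "(?F has_real_derivative mt t x) (at x)"
      using DERIV_add[OF DERIV_cmult[where c="\<sigma>\<^sup>2 / 2"] D] by (simp add: algebra_simps)
    then show "(?F has_vector_derivative mt t x) (at x)"
      by (simp add: has_real_derivative_iff_has_vector_derivative)
  qed (use L_pos in simp)
  moreover have "?F L = 0" "?F 0 = 0" using no_flux[OF t_in] by auto
  ultimately show ?thesis by (simp add: integral_unique)
qed

lemma mass_conserved:
  assumes t: "t \<in> {0..T}"
  shows "integral {0..L} (m t) = 1"
proof -
  have dM: "((\<lambda>s. integral {0..L} (m s)) has_real_derivative integral {0..L} (mt s))
      (at s within {0..T})"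
    if "s \<in> {0..T}" for s
    by (rule has_real_derivative_parametric_integral[OF dm_t cont_m cont_mt that])
  have "integral {0..L} (m 0) = integral {0..L} m0"
    by (rule integral_cong) (simp add: initial)
  then have mass_0: "integral {0..L} (m 0) = 1" using m0_density by (simp add: prob_density_def)
  show ?thesis
  proof (cases "t = 0")
    case False
    then have "0 < t" using t by simp
    have "integral {0..L} (m t) = integral {0..L} (m 0)"
    proof (rule DERIV_isconst_end[OF \<open>0 < t\<close>])
      show "continuous_on {0..t} (\<lambda>s. integral {0..L} (m s))"
        using continuous_on_subset[OF DERIV_continuous_on[OF dM]] t by auto
      fix s assume "0 < s" "s < t"
      then have "((\<lambda>s. integral {0..L} (m s)) has_real_derivative integral {0..L} (mt s)) (at s)"
        using dM[of s] at_within_Icc_at[of 0 s T] t by simp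
      then show "((\<lambda>s. integral {0..L} (m s)) has_real_derivative 0) (at s)"
        using integral_mt_eq_0[of s] \<open>0 < s\<close> \<open>s < t\<close> t by simp
    qed
    then show ?thesis using mass_0 by simp
  qed (use mass_0 in simp)
qed

lemma m_has_integral_1:
  assumes "t \<in> {0..T}"
  shows "(m t has_integral 1) {0..L}"
  using integrable_integral[OF integrable_continuous_interval[OF cont_slice(5)[OF assms]]]
  by (simp add: mass_conserved[OF assms])

lemma prob_density_m: "t \<in> {0..T} \<Longrightarrow> prob_density L (m t)"
  unfolding prob_density_def
  using m_nonneg mass_conserved integrable_continuous_interval[OF cont_slice(5)] by blast

abbreviation "pairing t \<equiv> integral {0..L} (\<lambda>x. u t x * m t x)"
abbreviation "dissipation t \<equiv> integral {0..L} (\<lambda>x. m t x * (ux t x)\<^sup>2)"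

lemma energy_flux_derivative:
  assumes t: "0 < t" "t < T" and x: "0 < x" "x < L"
  shows "((\<lambda>y. \<sigma>\<^sup>2 / 2 * (u t y * mx t y - ux t y * m t y) + u t y * (G t y * m t y))
    has_real_derivative ut t x * m t x + u t x * mt t x - r * (u t x * m t x)
      + ((b + c * mean_ux t)\<^sup>2 - (ux t x)\<^sup>2) / 4 * m t x) (at x)"
proof -
  have tx: "t \<in> {0..T}" "x \<in> {0..L}" using t x by auto
  have "((\<lambda>y. \<sigma>\<^sup>2 / 2 * (u t y * mx t y - ux t y * m t y) + u t y * (G t y * m t y))
    has_real_derivative \<sigma>\<^sup>2 / 2 * (u t x * mxx t x - uxx t x * m t x)
      + ux t x * (G t x * m t x) + u t x * (- uxx t x / 2 * m t x + G t x * mx t x)) (at x within {0..L})"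
    by (rule derivative_eq_intros du_x[OF tx] dm_x[OF tx] dux_x[OF tx] dmx_x[OF tx] dG_x[OF tx] refl
        | simp)+ (simp add: algebra_simps)
  moreover have "\<sigma>\<^sup>2 / 2 * (u t x * mxx t x - uxx t x * m t x)
      + ux t x * (G t x * m t x) + u t x * (- uxx t x / 2 * m t x + G t x * mx t x)
    = ut t x * m t x + u t x * mt t x - r * (u t x * m t x)
      + ((b + c * mean_ux t)\<^sup>2 - (ux t x)\<^sup>2) / 4 * m t x"
  proof -
    have ut: "ut t x = r * u t x - \<sigma>\<^sup>2 / 2 * uxx t x - (G t x)\<^sup>2" using hjb[OF t x] by simp
    have G_sq: "((b + c * mean_ux t)\<^sup>2 - (ux t x)\<^sup>2) / 4 = (G t x)\<^sup>2 + ux t x * G t x"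
      unfolding G_eq by (simp add: power2_eq_square field_simps)
    show ?thesis
      unfolding ut fokker_planck_expanded[OF t x] G_sq by (simp add: algebra_simps power2_eq_square)
  qed
  ultimately show ?thesis using at_within_Icc_at[of 0 x L] x by simp
qed

lemma integral_pairing_derivative:
  assumes t: "0 < t" "t < T"
  shows "integral {0..L} (\<lambda>x. ut t x * m t x + u t x * mt t x)
    = r * pairing t - (b + c * mean_ux t)\<^sup>2 / 4 + dissipation t / 4"
proof -
  have t_in: "t \<in> {0..T}" using t by simp
  define \<beta> where "\<beta> = (b + c * mean_ux t)\<^sup>2 / 4"
  let ?F = "\<lambda>y. \<sigma>\<^sup>2 / 2 * (u t y * mx t y - ux t y * m t y) + u t y * (G t y * m t y)"
  let ?h = "\<lambda>x. ut t x * m t x + u t x * mt t x - r * (u t x * m t x)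
    + ((b + c * mean_ux t)\<^sup>2 - (ux t x)\<^sup>2) / 4 * m t x"
  have "(?h has_integral ?F L - ?F 0) {0..L}"
  proof (rule fundamental_theorem_of_calculus_interior)
    show "continuous_on {0..L} ?F"
      using t_in by (intro continuous_intros cont_slice cont_G)
  qed (use L_pos energy_flux_derivative[OF t] in
    \<open>auto simp: has_real_derivative_iff_has_vector_derivative\<close>)
  moreover have "?F y = u t y * (\<sigma>\<^sup>2 / 2 * mx t y + G t y * m t y)" if "ux t y = 0" for y
    using that by (simp add: algebra_simps)
  then have "?F L = 0" "?F 0 = 0" using neumann[OF t_in] no_flux[OF t_in] by simp_all
  ultimately have h: "(?h has_integral 0) {0..L}" by simp
  have "((\<lambda>x. r * (u t x * m t x) - \<beta> * m t x + 1 / 4 * (m t x * (ux t x)\<^sup>2)) has_integral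
      r * pairing t - \<beta> * 1 + 1 / 4 * dissipation t) {0..L}"
    using t_in
    by (intro has_integral_add has_integral_diff has_integral_mult_right integrable_integral
        integrable_continuous_interval continuous_intros cont_slice m_has_integral_1) auto
  from has_integral_add[OF h this]
  have "((\<lambda>x. ?h x + (r * (u t x * m t x) - \<beta> * m t x + 1 / 4 * (m t x * (ux t x)\<^sup>2)))
      has_integral r * pairing t - \<beta> + dissipation t / 4) {0..L}"
    by simp
  moreover have "(\<lambda>x. ?h x + (r * (u t x * m t x) - \<beta> * m t x + 1 / 4 * (m t x * (ux t x)\<^sup>2)))
      = (\<lambda>x. ut t x * m t x + u t x * mt t x)"
    by (simp add: fun_eq_iff \<beta>_def algebra_simps diff_divide_distrib)
  ultimately show ?thesis by (simp add: integral_unique \<beta>_def)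
qed

lemma coupling_sq_le:
  assumes t: "t \<in> {0..T}"
  shows "(b + c * mean_ux t)\<^sup>2 \<le> b + c * dissipation t"
proof -
  have "(mean_ux t)\<^sup>2 \<le> dissipation t"
    by (rule integral_sq_le_integral_weighted_sq
        [OF cont_slice(3,5)[OF t] m_nonneg[OF t] mass_conserved[OF t]])
  then have "c * (mean_ux t)\<^sup>2 \<le> c * dissipation t" by (rule mult_left_mono[OF _ c_nonneg])
  with square_convex_combination_le[OF less_imp_le[OF b_pos] c_nonneg b_plus_c, of "mean_ux t"]
  show ?thesis by linarith
qed

lemma has_real_derivative_pairing:
  assumes "t \<in> {0..T}"
  shows "((\<lambda>s. pairing s) has_real_derivative integral {0..L} (\<lambda>x. ut t x * m t x + u t x * mt t x))
    (at t within {0..T})"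
proof (rule has_real_derivative_parametric_integral[OF _ _ _ assms])
  show "((\<lambda>s. u s x * m s x) has_real_derivative ut s x * m s x + u s x * mt s x) (at s within {0..T})"
    if "s \<in> {0..T}" "x \<in> {0..L}" for s x
    using DERIV_mult[OF du_t[OF that] dm_t[OF that]] by (simp add: algebra_simps)
  show "continuous_on ({0..T} \<times> {0..L}) (\<lambda>(s, x). u s x * m s x)"
    using continuous_on_mult[OF cont_u cont_m] by (simp add: case_prod_unfold)
  show "continuous_on ({0..T} \<times> {0..L}) (\<lambda>(s, x). ut s x * m s x + u s x * mt s x)"
    using continuous_on_add
        [OF continuous_on_mult[OF cont_ut cont_m] continuous_on_mult[OF cont_u cont_mt]]
    by (simp add: case_prod_unfold)
qed

lemma pairing_nonneg: "t \<in> {0..T} \<Longrightarrow> 0 \<le> pairing t"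
  by (intro integral_nonneg integrable_continuous_interval continuous_intros cont_slice)
     (auto intro!: mult_nonneg_nonneg u_nonneg m_nonneg)

lemma pairing_T_le:
  assumes "\<And>x. x \<in> {0..L} \<Longrightarrow> uT x \<le> B"
  shows "pairing T \<le> B"
proof (rule integral_mult_density_le)
  have "T \<in> {0..T}" using T_pos by simp
  then show "continuous_on {0..L} (u T)" "continuous_on {0..L} (m T)" "integral {0..L} (m T) = 1"
    "\<And>x. x \<in> {0..L} \<Longrightarrow> 0 \<le> m T x"
    by (auto intro: cont_slice m_nonneg mass_conserved)
qed (use assms terminal in auto)

abbreviation "pairing_rate t \<equiv> r * pairing t - (b + c * mean_ux t)\<^sup>2 / 4 + dissipation t / 4"

lemma pairing_rate_has_integral: "(pairing_rate has_integral pairing T - pairing 0) {0..T}"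
proof (rule fundamental_theorem_of_calculus_interior[OF less_imp_le[OF T_pos]])
  show "continuous_on {0..T} (\<lambda>t. pairing t)"
    by (rule DERIV_continuous_on[OF has_real_derivative_pairing])
  fix t assume t: "t \<in> {0<..<T}"
  then have "((\<lambda>s. pairing s) has_real_derivative pairing_rate t) (at t)"
    using has_real_derivative_pairing[of t] at_within_Icc_at[of 0 t T]
      integral_pairing_derivative[of t]
    by simp
  then show "((\<lambda>s. pairing s) has_vector_derivative pairing_rate t) (at t)"
    by (simp add: has_real_derivative_iff_has_vector_derivative)
qed

lemma dissipation_le_pairing_rate:
  assumes "t \<in> {0..T}"
  shows "b * dissipation t \<le> 4 * pairing_rate t - 4 * (r * pairing t) + b"
proof -
  have "b * dissipation t + c * dissipation t = dissipation t"
    using b_plus_c by (simp add: distrib_right[symmetric])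
  moreover have "4 * pairing_rate t - 4 * (r * pairing t) + b
      = dissipation t - (b + c * mean_ux t)\<^sup>2 + b"
    by (simp add: algebra_simps)
  ultimately show ?thesis using coupling_sq_le[OF assms] by linarith
qed

lemma dissipation_integral_le:
  assumes B: "\<And>x. x \<in> {0..L} \<Longrightarrow> uT x \<le> B"
  shows "integral {0..T} (\<lambda>t. dissipation t) \<le> 4 * B / b + T"
proof (cases "(\<lambda>t. dissipation t) integrable_on {0..T}")
  case False
  \<comment> \<open>then the integral is the junk value 0\<close>
  have "0 \<le> uT 0" "uT 0 \<le> B" using uT_nonneg B[of 0] L_pos by auto
  then show ?thesis using not_integrable_integral[OF False] b_pos T_pos by simp
next
  case True
  have cont_pairing: "continuous_on {0..T} (\<lambda>t. pairing t)"
    by (rule DERIV_continuous_on[OF has_real_derivative_pairing])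
  have "((\<lambda>t. 4 * pairing_rate t - 4 * (r * pairing t) + b) has_integral
      4 * (pairing T - pairing 0) - 4 * (r * integral {0..T} (\<lambda>t. pairing t)) + b * T) {0..T}"
    using has_integral_const_real[of b 0 T] T_pos
    by (intro has_integral_add has_integral_diff has_integral_mult_right integrable_integral
        integrable_continuous_interval cont_pairing pairing_rate_has_integral) (auto simp: mult.commute)
  moreover have "((\<lambda>t. b * dissipation t) has_integral b * integral {0..T} (\<lambda>t. dissipation t)) {0..T}"
    using True by (intro has_integral_mult_right integrable_integral)
  ultimately have "b * integral {0..T} (\<lambda>t. dissipation t)
      \<le> 4 * (pairing T - pairing 0) - 4 * (r * integral {0..T} (\<lambda>t. pairing t)) + b * T"
    using has_integral_le dissipation_le_pairing_rate by blast
  moreover have "0 \<le> 4 * (r * integral {0..T} (\<lambda>t. pairing t))"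
    using r_pos by (intro mult_nonneg_nonneg integral_nonneg integrable_continuous_interval
        cont_pairing pairing_nonneg) auto
  moreover have "pairing T \<le> B" "0 \<le> pairing 0"
    using pairing_T_le[OF B] pairing_nonneg T_pos by auto
  ultimately have "b * integral {0..T} (\<lambda>t. dissipation t) \<le> 4 * B + b * T"
    by (smt (verit))
  also have "\<dots> = b * (4 * B / b + T)" using b_pos by (simp add: field_simps)
  finally show ?thesis using b_pos by simp
qed

end

theorem proposition2p1:
  fixes L T \<sigma> r \<epsilon> \<gamma> b c :: real
    and uT uT1 uT2 m0 m01 m02 :: "real \<Rightarrow> real"
  assumes "L > 0" and "T > 0" and "\<sigma> > 0" and "r > 0" and "\<epsilon> > 0"
    and "b = 2 / (2 + \<epsilon>)" and "c = \<epsilon> / (2 + \<epsilon>)"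
    and "\<gamma> > 0"
    and "C2_holder \<gamma> L uT uT1 uT2" and "C2_holder \<gamma> L m0 m01 m02"
    and "uT1 0 = 0" and "uT1 L = 0"
    and "m0 0 = 0" and "m01 0 = 0" and "m0 L = 0" and "m01 L = 0"
    and "prob_density L m0"
    and "\<forall>x\<in>{0..L}. uT x \<ge> 0"
  shows "(\<forall>u ut ux uxx m mt mx mxx.
            mfg_solution L T \<sigma> r b c uT m0 u ut ux uxx m mt mx mxx \<longrightarrow>
              (\<forall>t\<in>{0..T}. prob_density L (m t)) \<and>
              (\<forall>t\<in>{0..T}. \<forall>x\<in>{0..L}. u t x \<ge> 0))
       \<and> (\<exists>C>0. \<forall>u ut ux uxx m mt mx mxx.
            mfg_solution L T \<sigma> r b c uT m0 u ut ux uxx m mt mx mxx \<longrightarrow>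
              integral {0..T} (\<lambda>t. integral {0..L} (\<lambda>x. m t x * (ux t x)\<^sup>2)) \<le> C)"
proof -
  have b_pos: "0 < b" and c_nonneg: "0 \<le> c" using assms(5-7) by simp_all
  have "b + c = 1" using assms(5-7) by (simp add: add_divide_distrib[symmetric])
  then have solution: "mfg_classical_solution L T \<sigma> r b c uT m0 u ut ux uxx m mt mx mxx"
    if "mfg_solution L T \<sigma> r b c uT m0 u ut ux uxx m mt mx mxx" for u ut ux uxx m mt mx mxx
    using that assms b_pos c_nonneg by unfold_locales auto
  \<comment> \<open>of the regularity assumptions on the data, only the continuity of \<open>uT\<close> is needed\<close>
  have "continuous_on {0..L} uT"
    using assms(9) unfolding C2_holder_def by (intro DERIV_continuous_on) auto
  then obtain x_max where "x_max \<in> {0..L}" and uT_max: "\<And>x. x \<in> {0..L} \<Longrightarrow> uT x \<le> uT x_max"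
    using continuous_attains_sup[of "{0..L}" uT] assms(1) by auto
  have "0 \<le> uT x_max" using assms(18) \<open>x_max \<in> {0..L}\<close> by blast
  then have "0 < 4 * uT x_max / b + T" using assms(2) b_pos by (simp add: add_nonneg_pos)
  show ?thesis
  proof (intro conjI allI impI exI[of _ "4 * uT x_max / b + T"])
    fix u ut ux uxx m mt mx mxx
    assume "mfg_solution L T \<sigma> r b c uT m0 u ut ux uxx m mt mx mxx"
    then interpret mfg_classical_solution L T \<sigma> r b c uT m0 u ut ux uxx m mt mx mxx
      by (rule solution)
    show "\<forall>t\<in>{0..T}. prob_density L (m t)" using prob_density_m by blast
    show "\<forall>t\<in>{0..T}. \<forall>x\<in>{0..L}. 0 \<le> u t x" using u_nonneg by blast
  next
    fix u ut ux uxx m mt mx mxx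
    assume "mfg_solution L T \<sigma> r b c uT m0 u ut ux uxx m mt mx mxx"
    then interpret mfg_classical_solution L T \<sigma> r b c uT m0 u ut ux uxx m mt mx mxx
      by (rule solution)
    show "integral {0..T} (\<lambda>t. dissipation t) \<le> 4 * uT x_max / b + T"
      by (rule dissipation_integral_le[OF uT_max])
  qed fact
qed

end
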